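(* Let $m\ge 2$ be an integer and let $h:\mathbb R\to\mathbb R$ be a $2\pi$-periodic function of class $C^m$. Then $$0\le \frac{(-1)^m}{2}(m-1)!\,(m+1)!\int_0^{2\pi}\big(h(t)^2-\dot h(t)^2\big)dt+\frac{(-1)^{m-1}(m!)^2}{2\pi}\Big(\int_0^{2\pi}h(t)\,dt\Big)^2+\sum_{k=1}^{m-1}S_{m,k}\int_0^{2\pi}\big(h^{(k+1)}(t)+h^{(k-1)}(t)\big)^2dt.$$ Equality holds if and only if $h(t)=\sum_{n=0}^{m}\big(\alpha_n\cos(nt)+\beta_n\sin(nt)\big)$ for some real constants $\alpha_n,\beta_n$.
   Context: For $m\ge2$, let $P_m(t)=\prod_{j=2}^m(t-j^2)$ and let $S_{m,1},\dots,S_{m,m-1}$ be the coefficients of the polynomial $\mathcal S_m(t)=\frac{P_m(t)-P_m(1)}{t-1}=\sum_{k=1}^{m-1}S_{m,k}t^{k-1}$. $h^{(k)}$ is the $k$-th derivative, $\dot h=h'$. *)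

theory Defs
  imports "HOL-Analysis.Analysis" "HOL-Computational_Algebra.Polynomial"
begin

definition P_poly :: "nat \<Rightarrow> real poly" where
  "P_poly m = (\<Prod>j=2..m. [: -((real j)^2), 1 :])"

text \<open>S_m(t) = (P_m(t) - P_m(1)) / (t - 1), an exact polynomial division.\<close>
definition S_poly :: "nat \<Rightarrow> real poly" where
  "S_poly m = (P_poly m - [: poly (P_poly m) 1 :]) div [: -1, 1 :]"

definition S_coeff :: "nat \<Rightarrow> nat \<Rightarrow> real" where
  "S_coeff m k = coeff (S_poly m) (k - 1)"

definition C_class :: "nat \<Rightarrow> (real \<Rightarrow> real) \<Rightarrow> bool" where
  "C_class m h \<longleftrightarrow> (\<forall>k<m. \<forall>x. ((deriv ^^ k) h) differentiable (at x))
                     \<and> continuous_on UNIV ((deriv ^^ m) h)"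

end

theory Submission
  imports Defs
begin

text \<open>
  Expand \<open>h\<close> in its Fourier series and write \<open>e\<^sub>n\<close> for the energy \<open>a\<^sub>n\<^sup>2 + b\<^sub>n\<^sup>2\<close> of the
  \<open>n\<close>-th mode (\<open>a\<^sub>0\<^sup>2 / 2\<close> for \<open>n = 0\<close>). Each derivative multiplies the \<open>n\<close>-th coefficients by
  \<open>n\<close> and rotates them, so by Parseval's identity every integral in the functional is a series
  in the \<open>e\<^sub>n\<close>, and the functional equals \<open>\<pi> \<Sum>\<^sub>n w\<^sub>n e\<^sub>n\<close>. The identity
  \<open>(t - 1) S\<^sub>m(t) = P\<^sub>m(t) - P\<^sub>m(1)\<close> together with the values \<open>P\<^sub>m(1)\<close> and \<open>P\<^sub>m(0)\<close> collapses the
  weights to \<open>w\<^sub>0 = 0\<close> and \<open>w\<^sub>n = (n\<^sup>2 - 1) P\<^sub>m(n\<^sup>2)\<close> for \<open>n \<ge> 1\<close>. Since \<open>P\<^sub>m\<close> vanishes at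
  \<open>2\<^sup>2, \<dots>, m\<^sup>2\<close> and is positive beyond \<open>m\<^sup>2\<close>, all \<open>w\<^sub>n \<ge> 0\<close>, with equality exactly for
  \<open>n \<le> m\<close>; hence the functional vanishes iff \<open>h\<close> has no modes above \<open>m\<close>.

  Parseval's identity for continuous \<open>2\<pi>\<close>-periodic functions is derived from Bessel's identity
  and the uniform density of trigonometric polynomials, which is Stone--Weierstrass on the
  unit circle.
\<close>

lemma continuous_on_UNIV_integrable:
  fixes f :: "real \<Rightarrow> 'a::banach"
  assumes "continuous_on UNIV f"
  shows "f integrable_on {a..b}"
  by (rule integrable_continuous_real[OF continuous_on_subset[OF assms]]) simp

lemma integral_add_continuous:
  fixes f g :: "real \<Rightarrow> real"
  assumes "continuous_on UNIV f" "continuous_on UNIV g"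
  shows "integral {a..b} (\<lambda>t. f t + g t) = integral {a..b} f + integral {a..b} g"
  by (intro integral_add continuous_on_UNIV_integrable assms)

lemma integral_diff_continuous:
  fixes f g :: "real \<Rightarrow> real"
  assumes "continuous_on UNIV f" "continuous_on UNIV g"
  shows "integral {a..b} (\<lambda>t. f t - g t) = integral {a..b} f - integral {a..b} g"
  by (intro integral_diff continuous_on_UNIV_integrable assms)

lemma periodic_reduce:
  fixes f :: "real \<Rightarrow> 'a"
  assumes "\<And>t. f (t + 2*pi) = f t"
  obtains s where "s \<in> {0..2*pi}" "f t = f s"
proof -
  interpret periodic_fun_simple f "2*pi" by standard (rule assms)
  define k where "k = \<lfloor>t / (2*pi)\<rfloor>"
  have "of_int k \<le> t / (2*pi)" "t / (2*pi) < of_int k + 1"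
    unfolding k_def by linarith+
  then have "t - of_int k * (2*pi) \<in> {0..2*pi}"
    by (auto simp: field_simps)
  moreover have "f t = f (t - of_int k * (2*pi))"
    by (simp only: minus_of_int)
  ultimately show ?thesis using that by blast
qed

lemma periodic_cis_eq:
  fixes f :: "real \<Rightarrow> 'a"
  assumes "\<And>t. f (t + 2*pi) = f t" and "cis a = cis b"
  shows "f a = f b"
proof -
  interpret periodic_fun_simple f "2*pi" by standard (rule assms(1))
  have "sin a = sin b \<and> cos a = cos b"
    using assms(2) by (metis cis.sel)
  then obtain n :: int where "a = b + 2*pi*n"
    using sin_cos_eq_iff by blast
  then show ?thesis
    using plus_of_int[of b n] by (simp add: mult.commute)
qed

subsection \<open>Orthogonality of the trigonometric system\<close>

lemma integral_cos_int_multiple: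
  "integral {0..2*pi} (\<lambda>t. cos (of_int j * t)) = (if j = 0 then 2*pi else 0)"
proof (cases "j = 0")
  case False
  have "((\<lambda>t. cos (of_int j * t)) has_integral
          sin (of_int j * (2*pi)) / of_int j - sin (of_int j * 0) / of_int j) {0..2*pi}"
    by (rule fundamental_theorem_of_calculus)
       (use False in \<open>auto intro!: derivative_eq_intros
          simp: has_real_derivative_iff_has_vector_derivative[symmetric]\<close>)
  moreover have "sin (of_int j * (2*pi)) = 0"
    by (metis mult.commute sin_int_2pin)
  ultimately show ?thesis
    using False by (simp add: integral_unique)
qed simp

lemma integral_sin_int_multiple:
  "integral {0..2*pi} (\<lambda>t. sin (of_int j * t)) = 0"
proof (cases "j = 0")
  case False
  have "((\<lambda>t. sin (of_int j * t)) has_integral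
          - cos (of_int j * (2*pi)) / of_int j - - cos (of_int j * 0) / of_int j) {0..2*pi}"
    by (rule fundamental_theorem_of_calculus)
       (use False in \<open>auto intro!: derivative_eq_intros
          simp: has_real_derivative_iff_has_vector_derivative[symmetric]\<close>)
  moreover have "cos (of_int j * (2*pi)) = 1"
    by (metis mult.commute cos_int_2pin)
  ultimately show ?thesis
    by (simp add: integral_unique)
qed simp

lemma nat_frequency_diff_add:
  "real n * t - real k * t = of_int (int n - int k) * t"
  "real n * t + real k * t = of_int (int n + int k) * t"
  by (simp_all add: algebra_simps)

lemma integral_cos_mult_cos:
  "integral {0..2*pi} (\<lambda>t. cos (real n * t) * cos (real k * t)) =
     (if n = k then if n = 0 then 2*pi else pi else 0)"
proof -
  have prod: "cos (real n * t) * cos (real k * t) =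
      cos (of_int (int n - int k) * t) / 2 + cos (of_int (int n + int k) * t) / 2" for t
    using cos_times_cos[of "real n * t" "real k * t"]
    unfolding nat_frequency_diff_add by (simp add: add_divide_distrib)
  have "integral {0..2*pi} (\<lambda>t. cos (real n * t) * cos (real k * t))
      = integral {0..2*pi} (\<lambda>t. cos (of_int (int n - int k) * t)) / 2
        + integral {0..2*pi} (\<lambda>t. cos (of_int (int n + int k) * t)) / 2"
    unfolding prod by (subst integral_add_continuous) (auto intro!: continuous_intros)
  then show ?thesis
    unfolding integral_cos_int_multiple by auto
qed

lemma integral_sin_mult_sin:
  "integral {0..2*pi} (\<lambda>t. sin (real n * t) * sin (real k * t)) =
     (if n = k \<and> n \<noteq> 0 then pi else 0)"
proof -
  have prod: "sin (real n * t) * sin (real k * t) =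
      cos (of_int (int n - int k) * t) / 2 - cos (of_int (int n + int k) * t) / 2" for t
    using sin_times_sin[of "real n * t" "real k * t"]
    unfolding nat_frequency_diff_add by (simp add: diff_divide_distrib)
  have "integral {0..2*pi} (\<lambda>t. sin (real n * t) * sin (real k * t))
      = integral {0..2*pi} (\<lambda>t. cos (of_int (int n - int k) * t)) / 2
        - integral {0..2*pi} (\<lambda>t. cos (of_int (int n + int k) * t)) / 2"
    unfolding prod by (subst integral_diff_continuous) (auto intro!: continuous_intros)
  then show ?thesis
    unfolding integral_cos_int_multiple by auto
qed

lemma integral_cos_mult_sin:
  "integral {0..2*pi} (\<lambda>t. cos (real n * t) * sin (real k * t)) = 0"
proof -
  have prod: "cos (real n * t) * sin (real k * t) =
      sin (of_int (int n + int k) * t) / 2 - sin (of_int (int n - int k) * t) / 2" for t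
    using cos_times_sin[of "real n * t" "real k * t"]
    unfolding nat_frequency_diff_add by (simp add: diff_divide_distrib)
  have "integral {0..2*pi} (\<lambda>t. cos (real n * t) * sin (real k * t))
      = integral {0..2*pi} (\<lambda>t. sin (of_int (int n + int k) * t)) / 2
        - integral {0..2*pi} (\<lambda>t. sin (of_int (int n - int k) * t)) / 2"
    unfolding prod by (subst integral_diff_continuous) (auto intro!: continuous_intros)
  then show ?thesis
    unfolding integral_sin_int_multiple by simp
qed

definition trig_poly :: "nat \<Rightarrow> (nat \<Rightarrow> real) \<Rightarrow> (nat \<Rightarrow> real) \<Rightarrow> real \<Rightarrow> real" where
  "trig_poly N a b t = (\<Sum>n\<le>N. a n * cos (real n * t) + b n * sin (real n * t))"

definition fourier_cos :: "nat \<Rightarrow> (real \<Rightarrow> real) \<Rightarrow> real" where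
  "fourier_cos n f = integral {0..2*pi} (\<lambda>t. f t * cos (real n * t)) / pi"

definition fourier_sin :: "nat \<Rightarrow> (real \<Rightarrow> real) \<Rightarrow> real" where
  "fourier_sin n f = integral {0..2*pi} (\<lambda>t. f t * sin (real n * t)) / pi"

definition fourier_energy :: "nat \<Rightarrow> (real \<Rightarrow> real) \<Rightarrow> real" where
  "fourier_energy n f =
     (if n = 0 then (fourier_cos 0 f)^2 / 2 else (fourier_cos n f)^2 + (fourier_sin n f)^2)"

definition fourier_partial_sum :: "nat \<Rightarrow> (real \<Rightarrow> real) \<Rightarrow> real \<Rightarrow> real" where
  "fourier_partial_sum N f =
     trig_poly N (\<lambda>n. if n = 0 then fourier_cos 0 f / 2 else fourier_cos n f) (\<lambda>n. fourier_sin n f)"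

lemma fourier_sin_0 [simp]: "fourier_sin 0 f = 0"
  by (simp add: fourier_sin_def)

lemma fourier_energy_nonneg: "0 \<le> fourier_energy n f"
  by (simp add: fourier_energy_def)

lemma continuous_on_trig_poly [continuous_intros]: "continuous_on S (trig_poly N a b)"
  unfolding trig_poly_def by (intro continuous_intros)

lemma trig_poly_periodic: "trig_poly N a b (t + 2*pi) = trig_poly N a b t"
proof -
  have "cos (real n * (t + 2*pi)) = cos (real n * t)" "sin (real n * (t + 2*pi)) = sin (real n * t)" for n
    using cos.plus_of_nat[of "real n * t" n] sin.plus_of_nat[of "real n * t" n]
    by (simp_all add: algebra_simps)
  then show ?thesis
    by (simp add: trig_poly_def)
qed

lemma integral_trig_poly_mult_cos:
  "integral {0..2*pi} (\<lambda>t. trig_poly N a b t * cos (real k * t)) =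
     (if k \<le> N then if k = 0 then 2*pi * a 0 else pi * a k else 0)"
proof -
  have "integral {0..2*pi} (\<lambda>t. trig_poly N a b t * cos (real k * t)) =
      (\<Sum>n\<le>N. integral {0..2*pi} (\<lambda>t. a n * (cos (real n * t) * cos (real k * t))
                                       + b n * (cos (real k * t) * sin (real n * t))))"
    unfolding trig_poly_def sum_distrib_right
    by (subst integral_sum) (auto intro!: continuous_on_UNIV_integrable continuous_intros
                              intro: sum.cong simp: algebra_simps)
  also have "\<dots> = (\<Sum>n\<le>N. if n = k then a k * (if k = 0 then 2*pi else pi) else 0)"
    by (intro sum.cong refl, subst integral_add_continuous)
       (auto intro!: continuous_intros simp: integral_cos_mult_cos integral_cos_mult_sin)
  finally show ?thesis
    by (simp add: sum.delta)
qed

lemma integral_trig_poly_mult_sin: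
  "integral {0..2*pi} (\<lambda>t. trig_poly N a b t * sin (real k * t)) =
     (if k \<le> N \<and> k \<noteq> 0 then pi * b k else 0)"
proof -
  have "integral {0..2*pi} (\<lambda>t. trig_poly N a b t * sin (real k * t)) =
      (\<Sum>n\<le>N. integral {0..2*pi} (\<lambda>t. a n * (cos (real n * t) * sin (real k * t))
                                       + b n * (sin (real n * t) * sin (real k * t))))"
    unfolding trig_poly_def sum_distrib_right
    by (subst integral_sum) (auto intro!: continuous_on_UNIV_integrable continuous_intros
                              intro: sum.cong simp: algebra_simps)
  also have "\<dots> = (\<Sum>n\<le>N. if n = k then b k * (if k = 0 then 0 else pi) else 0)"
    by (intro sum.cong refl, subst integral_add_continuous)
       (auto intro!: continuous_intros simp: integral_sin_mult_sin integral_cos_mult_sin)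
  finally show ?thesis
    by (simp add: sum.delta)
qed

lemma fourier_cos_trig_poly:
  "fourier_cos k (trig_poly N a b) = (if k \<le> N then if k = 0 then 2 * a 0 else a k else 0)"
  unfolding fourier_cos_def integral_trig_poly_mult_cos by auto

lemma fourier_sin_trig_poly:
  "fourier_sin k (trig_poly N a b) = (if k \<le> N \<and> k \<noteq> 0 then b k else 0)"
  unfolding fourier_sin_def integral_trig_poly_mult_sin by auto

lemma integral_mult_trig_poly:
  assumes "continuous_on UNIV f"
  shows "integral {0..2*pi} (\<lambda>t. f t * trig_poly N a b t) =
           pi * (\<Sum>n\<le>N. a n * fourier_cos n f + b n * fourier_sin n f)"
proof -
  have "integral {0..2*pi} (\<lambda>t. f t * trig_poly N a b t) =
      (\<Sum>n\<le>N. integral {0..2*pi} (\<lambda>t. a n * (f t * cos (real n * t))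
                                       + b n * (f t * sin (real n * t))))"
    unfolding trig_poly_def sum_distrib_left
    by (subst integral_sum) (auto intro!: continuous_on_UNIV_integrable continuous_intros assms
                              intro: sum.cong simp: algebra_simps)
  also have "\<dots> = pi * (\<Sum>n\<le>N. a n * fourier_cos n f + b n * fourier_sin n f)"
    unfolding sum_distrib_left
    by (intro sum.cong refl, subst integral_add_continuous)
       (auto intro!: continuous_intros assms simp: fourier_cos_def fourier_sin_def field_simps)
  finally show ?thesis .
qed

lemma integral_trig_poly_sq:
  "integral {0..2*pi} (\<lambda>t. (trig_poly N a b t)^2) =
     pi * (\<Sum>n\<le>N. if n = 0 then 2 * (a 0)^2 else (a n)^2 + (b n)^2)"
proof -
  have "integral {0..2*pi} (\<lambda>t. (trig_poly N a b t)^2) =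
      pi * (\<Sum>n\<le>N. a n * fourier_cos n (trig_poly N a b) + b n * fourier_sin n (trig_poly N a b))"
    unfolding power2_eq_square by (intro integral_mult_trig_poly continuous_intros)
  also have "\<dots> = pi * (\<Sum>n\<le>N. if n = 0 then 2 * (a 0)^2 else (a n)^2 + (b n)^2)"
    by (intro arg_cong[where f="(*) pi"] sum.cong)
       (auto simp: fourier_cos_trig_poly fourier_sin_trig_poly power2_eq_square)
  finally show ?thesis .
qed

definition coeff_dist_sq :: "nat \<Rightarrow> (real \<Rightarrow> real) \<Rightarrow> (nat \<Rightarrow> real) \<Rightarrow> (nat \<Rightarrow> real) \<Rightarrow> real" where
  "coeff_dist_sq n f a b =
     (if n = 0 then 2 * (a 0 - fourier_cos 0 f / 2)^2
      else (a n - fourier_cos n f)^2 + (b n - fourier_sin n f)^2)"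

lemma integral_sq_diff_trig_poly:
  assumes f: "continuous_on UNIV f"
  shows "integral {0..2*pi} (\<lambda>t. (f t - trig_poly N a b t)^2) =
           integral {0..2*pi} (\<lambda>t. (f t)^2)
           - pi * (\<Sum>n\<le>N. fourier_energy n f) + pi * (\<Sum>n\<le>N. coeff_dist_sq n f a b)"
proof -
  have "(\<lambda>t. (f t - trig_poly N a b t)^2) =
      (\<lambda>t. ((f t)^2 + (trig_poly N a b t)^2) - 2 * (f t * trig_poly N a b t))"
    by (simp add: power2_diff algebra_simps)
  then have "integral {0..2*pi} (\<lambda>t. (f t - trig_poly N a b t)^2) =
      integral {0..2*pi} (\<lambda>t. (f t)^2) + integral {0..2*pi} (\<lambda>t. (trig_poly N a b t)^2)
      - 2 * integral {0..2*pi} (\<lambda>t. f t * trig_poly N a b t)"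
    by (simp only:, subst integral_diff_continuous integral_add_continuous,
        (auto intro!: continuous_intros f)[2])+ simp
  also have "\<dots> = integral {0..2*pi} (\<lambda>t. (f t)^2)
      + pi * (\<Sum>n\<le>N. (if n = 0 then 2 * (a 0)^2 else (a n)^2 + (b n)^2)
                      - 2 * (a n * fourier_cos n f + b n * fourier_sin n f))"
    unfolding integral_trig_poly_sq integral_mult_trig_poly[OF f]
    by (simp add: algebra_simps sum_subtractf sum_distrib_left)
  also have "(\<Sum>n\<le>N. (if n = 0 then 2 * (a 0)^2 else (a n)^2 + (b n)^2)
                      - 2 * (a n * fourier_cos n f + b n * fourier_sin n f))
           = (\<Sum>n\<le>N. coeff_dist_sq n f a b - fourier_energy n f)"
    by (rule sum.cong) (auto simp: coeff_dist_sq_def fourier_energy_def power2_eq_square algebra_simps)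
  finally show ?thesis
    by (simp add: sum_subtractf algebra_simps)
qed

lemma integral_sq_diff_fourier_partial_sum:
  assumes "continuous_on UNIV f"
  shows "integral {0..2*pi} (\<lambda>t. (f t - fourier_partial_sum N f t)^2) =
           integral {0..2*pi} (\<lambda>t. (f t)^2) - pi * (\<Sum>n\<le>N. fourier_energy n f)"
proof -
  have "coeff_dist_sq n f (\<lambda>n. if n = 0 then fourier_cos 0 f / 2 else fourier_cos n f)
          (\<lambda>n. fourier_sin n f) = 0" for n
    by (simp add: coeff_dist_sq_def)
  then show ?thesis
    using integral_sq_diff_trig_poly[OF assms] by (simp add: fourier_partial_sum_def)
qed

lemma bessel_inequality:
  assumes "continuous_on UNIV f"
  shows "pi * (\<Sum>n\<le>N. fourier_energy n f) \<le> integral {0..2*pi} (\<lambda>t. (f t)^2)"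
proof -
  have "0 \<le> integral {0..2*pi} (\<lambda>t. (f t - fourier_partial_sum N f t)^2)"
    by (rule integral_nonneg)
       (auto intro!: continuous_on_UNIV_integrable continuous_intros assms
             simp: fourier_partial_sum_def)
  then show ?thesis
    unfolding integral_sq_diff_fourier_partial_sum[OF assms] by simp
qed

subsection \<open>Density of trigonometric polynomials\<close>

definition is_trig_poly :: "(real \<Rightarrow> real) \<Rightarrow> bool" where
  "is_trig_poly g \<longleftrightarrow> (\<exists>N a b. g = trig_poly N a b)"

lemma trig_poly_extend:
  assumes "N \<le> M"
  shows "trig_poly N a b =
           trig_poly M (\<lambda>n. if n \<le> N then a n else 0) (\<lambda>n. if n \<le> N then b n else 0)"
proof
  fix t
  have "trig_poly M (\<lambda>n. if n \<le> N then a n else 0) (\<lambda>n. if n \<le> N then b n else 0) t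
      = (\<Sum>n\<in>{..M}. if n \<in> {..N} then a n * cos (real n * t) + b n * sin (real n * t) else 0)"
    unfolding trig_poly_def by (rule sum.cong) auto
  also have "\<dots> = (\<Sum>n\<in>{..M} \<inter> {..N}. a n * cos (real n * t) + b n * sin (real n * t))"
    by (rule sum.inter_restrict[symmetric]) simp
  also have "{..M} \<inter> {..N} = {..N}"
    using assms by auto
  finally show "trig_poly N a b t =
      trig_poly M (\<lambda>n. if n \<le> N then a n else 0) (\<lambda>n. if n \<le> N then b n else 0) t"
    by (simp add: trig_poly_def)
qed

lemma trig_poly_add:
  "trig_poly N a b t + trig_poly N c d t = trig_poly N (\<lambda>n. a n + c n) (\<lambda>n. b n + d n) t"
  by (simp add: trig_poly_def sum.distrib[symmetric] algebra_simps)

lemma trig_poly_single: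
  "trig_poly n (\<lambda>k. if k = n then c else 0) (\<lambda>k. if k = n then s else 0) t =
     c * cos (real n * t) + s * sin (real n * t)"
proof -
  have "trig_poly n (\<lambda>k. if k = n then c else 0) (\<lambda>k. if k = n then s else 0) t =
      (\<Sum>k\<le>n. if k = n then c * cos (real n * t) + s * sin (real n * t) else 0)"
    unfolding trig_poly_def by (rule sum.cong) auto
  then show ?thesis
    by simp
qed

lemma is_trig_poly_add:
  assumes "is_trig_poly f" "is_trig_poly g"
  shows "is_trig_poly (\<lambda>t. f t + g t)"
proof -
  obtain N a b M c d where f: "f = trig_poly N a b" and g: "g = trig_poly M c d"
    using assms unfolding is_trig_poly_def by blast
  define K where "K = max N M"
  have "f = trig_poly K (\<lambda>n. if n \<le> N then a n else 0) (\<lambda>n. if n \<le> N then b n else 0)"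
    unfolding f K_def by (rule trig_poly_extend) simp
  moreover have "g = trig_poly K (\<lambda>n. if n \<le> M then c n else 0) (\<lambda>n. if n \<le> M then d n else 0)"
    unfolding g K_def by (rule trig_poly_extend) simp
  ultimately have "(\<lambda>t. f t + g t) = trig_poly K
      (\<lambda>n. (if n \<le> N then a n else 0) + (if n \<le> M then c n else 0))
      (\<lambda>n. (if n \<le> N then b n else 0) + (if n \<le> M then d n else 0))"
    by (simp only: trig_poly_add)
  then show ?thesis
    unfolding is_trig_poly_def by blast
qed

lemma is_trig_poly_sum:
  assumes "finite A" "\<And>i. i \<in> A \<Longrightarrow> is_trig_poly (f i)"
  shows "is_trig_poly (\<lambda>t. \<Sum>i\<in>A. f i t)"
  using assms
proof (induction A rule: finite_induct)
  case empty
  have "(\<lambda>t. \<Sum>i\<in>{}. f i t) = trig_poly 0 (\<lambda>_. 0) (\<lambda>_. 0)"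
    by (simp add: trig_poly_def fun_eq_iff)
  then show ?case
    unfolding is_trig_poly_def by blast
next
  case (insert x F)
  then have "is_trig_poly (\<lambda>t. f x t + (\<Sum>i\<in>F. f i t))"
    by (intro is_trig_poly_add) auto
  with insert.hyps show ?case
    by simp
qed

lemma is_trig_poly_mode:
  "is_trig_poly (\<lambda>t. c * cos (of_int j * t) + s * sin (of_int j * t))"
proof (cases "j \<ge> 0")
  case True
  then have "(\<lambda>t. c * cos (of_int j * t) + s * sin (of_int j * t)) =
      trig_poly (nat j) (\<lambda>k. if k = nat j then c else 0) (\<lambda>k. if k = nat j then s else 0)"
    by (simp add: trig_poly_single fun_eq_iff)
  then show ?thesis
    unfolding is_trig_poly_def by blast
next
  case False
  then have "(\<lambda>t. c * cos (of_int j * t) + s * sin (of_int j * t)) =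
      trig_poly (nat (- j)) (\<lambda>k. if k = nat (- j) then c else 0) (\<lambda>k. if k = nat (- j) then - s else 0)"
    by (simp add: trig_poly_single fun_eq_iff)
  then show ?thesis
    unfolding is_trig_poly_def by blast
qed

lemma is_trig_poly_mode_mult:
  "is_trig_poly (\<lambda>t. (c1 * cos (real n * t) + s1 * sin (real n * t))
                     * (c2 * cos (real k * t) + s2 * sin (real k * t)))"
proof -
  have "(c1 * cos (real n * t) + s1 * sin (real n * t)) * (c2 * cos (real k * t) + s2 * sin (real k * t))
      = ((c1 * c2 + s1 * s2) / 2 * cos (of_int (int n - int k) * t)
           + (s1 * c2 - c1 * s2) / 2 * sin (of_int (int n - int k) * t))
        + ((c1 * c2 - s1 * s2) / 2 * cos (of_int (int n + int k) * t)
           + (s1 * c2 + c1 * s2) / 2 * sin (of_int (int n + int k) * t))" for t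
    unfolding nat_frequency_diff_add[symmetric] cos_diff sin_diff cos_add sin_add
    by (simp add: field_simps)
  then show ?thesis
    by (simp only:) (intro is_trig_poly_add is_trig_poly_mode)
qed

lemma is_trig_poly_mult:
  assumes "is_trig_poly f" "is_trig_poly g"
  shows "is_trig_poly (\<lambda>t. f t * g t)"
proof -
  obtain N a b M c d where f: "f = trig_poly N a b" and g: "g = trig_poly M c d"
    using assms unfolding is_trig_poly_def by blast
  have "f t * g t = (\<Sum>n\<le>N. \<Sum>k\<le>M. (a n * cos (real n * t) + b n * sin (real n * t))
                                     * (c k * cos (real k * t) + d k * sin (real k * t)))" for t
    unfolding f g trig_poly_def sum_product ..
  then show ?thesis
    by (simp only:) (intro is_trig_poly_sum finite_atMost is_trig_poly_mode_mult)
qed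

lemma is_trig_poly_polynomial_on_circle:
  assumes "real_polynomial_function p"
  shows "is_trig_poly (\<lambda>t. p (cis t))"
  using assms
proof (induction p rule: real_polynomial_function.induct)
  case (linear p)
  interpret bounded_linear p by fact
  have "p (cis t) = p 1 * cos (of_int 1 * t) + p \<i> * sin (of_int 1 * t)" for t
  proof -
    have "cis t = cos t *\<^sub>R 1 + sin t *\<^sub>R \<i>"
      by (simp add: complex_eq_iff)
    then show ?thesis
      by (simp add: add scale mult.commute)
  qed
  then show ?case
    by (simp only:) (rule is_trig_poly_mode)
next
  case (const c)
  then show ?case
    using is_trig_poly_mode[of c 0 0] by simp
next
  case (add f g)
  from add.IH show ?case
    by (rule is_trig_poly_add)
next
  case (mult f g)
  from mult.IH show ?case
    by (rule is_trig_poly_mult)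
qed

lemma continuous_on_sphere_periodic_Arg:
  fixes f :: "real \<Rightarrow> real"
  assumes f: "continuous_on UNIV f" and periodic: "\<And>t. f (t + 2*pi) = f t"
  shows "continuous_on (sphere 0 1) (\<lambda>z. f (Arg z))"
  unfolding continuous_on_eq_continuous_within
proof
  fix z :: complex
  assume z: "z \<in> sphere 0 1"
  have isCont_f: "isCont f x" for x
    using f by (simp add: continuous_on_eq_continuous_at)
  show "continuous (at z within sphere 0 1) (\<lambda>z. f (Arg z))"
  proof (cases "z \<in> \<real>\<^sub>\<le>\<^sub>0")
    case False
    have "isCont (\<lambda>z. f (Arg z)) z"
      by (rule continuous_at_compose[unfolded o_def, OF continuous_at_Arg[OF False] isCont_f])
    then show ?thesis
      by (rule continuous_at_imp_continuous_at_within)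
  next
    case True
    \<comment> \<open>\<open>Arg\<close> jumps on the negative real axis; there use the branch \<open>Arg (- w) + pi\<close> instead\<close>
    define g where "g w = f (Arg (- w) + pi)" for w
    have g_eq: "g w = f (Arg w)" if "w \<noteq> 0" for w
      unfolding g_def
    proof (rule periodic_cis_eq[where f = f, OF periodic])
      have "cis (Arg (- w) + pi) = cis (Arg (- w)) * cis pi"
        by (simp add: minus_cis)
      also have "\<dots> = cis (Arg w)"
        using that by (simp add: cis_Arg sgn_minus)
      finally show "cis (Arg (- w) + pi) = cis (Arg w)" .
    qed
    have "z \<noteq> 0"
      using z by auto
    with True have "- z \<notin> \<real>\<^sub>\<le>\<^sub>0"
      by (auto simp: complex_nonpos_Reals_iff complex_eq_iff)
    then have "isCont (\<lambda>w. Arg (- w)) z"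
      using isCont_o2[where f = "\<lambda>w. - w" and g = Arg and a = z] continuous_at_Arg by simp
    then have "isCont g z"
      unfolding g_def by (intro continuous_at_compose[unfolded o_def, OF _ isCont_f] continuous_intros)
    then have "continuous (at z within sphere 0 1) g"
      by (rule continuous_at_imp_continuous_at_within)
    then show ?thesis
    proof (rule continuous_transform_within[OF _ zero_less_one z])
      fix w :: complex
      assume "w \<in> sphere 0 1"
      then show "g w = f (Arg w)"
        by (intro g_eq) auto
    qed
  qed
qed

lemma trig_poly_uniform_approximation:
  fixes f :: "real \<Rightarrow> real"
  assumes f: "continuous_on UNIV f" and periodic: "\<And>t. f (t + 2*pi) = f t" and "e > 0"
  obtains N a b where "\<And>t. \<bar>f t - trig_poly N a b t\<bar> < e"
proof -
  obtain p where p: "real_polynomial_function p"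
      "\<And>z. z \<in> sphere 0 1 \<Longrightarrow> \<bar>f (Arg z) - p z\<bar> < e"
    using Stone_Weierstrass_real_polynomial_function[OF compact_sphere
        continuous_on_sphere_periodic_Arg[OF f periodic] \<open>e > 0\<close>] by blast
  obtain N a b where "(\<lambda>t. p (cis t)) = trig_poly N a b"
    using is_trig_poly_polynomial_on_circle[OF p(1)] unfolding is_trig_poly_def by blast
  moreover have "f t = f (Arg (cis t))" for t
    by (rule periodic_cis_eq[where f = f, OF periodic]) (simp add: cis_Arg)
  ultimately have "\<bar>f t - trig_poly N a b t\<bar> < e" for t
    using p(2)[of "cis t"] by (metis mem_sphere_0 norm_cis)
  then show ?thesis
    using that by blast
qed

subsection \<open>Parseval's identity\<close>

lemma integral_sq_diff_trig_poly_lower_bound: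
  assumes "continuous_on UNIV f"
  shows "integral {0..2*pi} (\<lambda>t. (f t)^2) - pi * (\<Sum>n\<le>N. fourier_energy n f)
           \<le> integral {0..2*pi} (\<lambda>t. (f t - trig_poly N a b t)^2)"
proof -
  have "0 \<le> (\<Sum>n\<le>N. coeff_dist_sq n f a b)"
    by (intro sum_nonneg) (simp add: coeff_dist_sq_def)
  then show ?thesis
    unfolding integral_sq_diff_trig_poly[OF assms] by simp
qed

theorem parseval:
  fixes f :: "real \<Rightarrow> real"
  assumes f: "continuous_on UNIV f" and periodic: "\<And>t. f (t + 2*pi) = f t"
  shows "(\<lambda>n. fourier_energy n f) sums (integral {0..2*pi} (\<lambda>t. (f t)^2) / pi)"
  unfolding sums_def_le
proof (rule LIMSEQ_I)
  fix r :: real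
  assume "0 < r"
  define I where "I = integral {0..2*pi} (\<lambda>t. (f t)^2)"
  have "sqrt (r / 4) > 0"
    using \<open>0 < r\<close> by simp
  then obtain N0 a b where approx: "\<And>t. \<bar>f t - trig_poly N0 a b t\<bar> < sqrt (r / 4)"
    using trig_poly_uniform_approximation[OF f periodic] by blast
  have tail: "I / pi - (\<Sum>n\<le>N. fourier_energy n f) \<le> r / 2" if "N0 \<le> N" for N
  proof -
    define T where "T = trig_poly N (\<lambda>n. if n \<le> N0 then a n else 0) (\<lambda>n. if n \<le> N0 then b n else 0)"
    have "(f t - T t)^2 \<le> r / 4" for t
    proof -
      have "\<bar>f t - T t\<bar> < sqrt (r / 4)"
        using approx[of t] trig_poly_extend[OF that, of a b] by (simp add: T_def)
      then have "\<bar>f t - T t\<bar>^2 \<le> sqrt (r / 4) ^ 2"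
        by (intro power_mono) auto
      with \<open>0 < r\<close> show ?thesis
        by simp
    qed
    have "I - pi * (\<Sum>n\<le>N. fourier_energy n f) \<le> integral {0..2*pi} (\<lambda>t. (f t - T t)^2)"
      unfolding I_def T_def by (rule integral_sq_diff_trig_poly_lower_bound[OF f])
    also have "\<dots> \<le> integral {0..2*pi} (\<lambda>t. r / 4)"
      using \<open>\<And>t. (f t - T t)^2 \<le> r / 4\<close>
      by (intro integral_le continuous_on_UNIV_integrable continuous_intros f)
         (simp_all add: T_def continuous_on_trig_poly)
    also have "\<dots> = pi * (r / 2)"
      by simp
    finally have "(I - pi * (\<Sum>n\<le>N. fourier_energy n f)) / pi \<le> (pi * (r / 2)) / pi"
      by (intro divide_right_mono) simp_all
    then show ?thesis
      by (simp add: diff_divide_distrib)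
  qed
  have bessel: "(\<Sum>n\<le>N. fourier_energy n f) \<le> I / pi" for N
    using bessel_inequality[OF f, of N] by (simp add: I_def field_simps)
  have "\<bar>(\<Sum>n\<le>N. fourier_energy n f) - I / pi\<bar> < r" if "N0 \<le> N" for N
    using tail[OF that] bessel[of N] \<open>0 < r\<close> unfolding abs_less_iff by linarith
  then show "\<exists>N0. \<forall>N\<ge>N0. norm ((\<Sum>n\<le>N. fourier_energy n f) - I / pi) < r"
    by auto
qed

lemma fourier_energy_trig_poly:
  "n > N \<Longrightarrow> fourier_energy n (trig_poly N a b) = 0"
  by (simp add: fourier_energy_def fourier_cos_trig_poly fourier_sin_trig_poly)

lemma trig_poly_iff_fourier_energy_vanishes:
  fixes f :: "real \<Rightarrow> real"
  assumes f: "continuous_on UNIV f" and periodic: "\<And>t. f (t + 2*pi) = f t"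
  shows "(\<exists>a b. f = trig_poly N a b) \<longleftrightarrow> (\<forall>n>N. fourier_energy n f = 0)"
proof
  assume "\<exists>a b. f = trig_poly N a b"
  then show "\<forall>n>N. fourier_energy n f = 0"
    using fourier_energy_trig_poly by blast
next
  assume vanish: "\<forall>n>N. fourier_energy n f = 0"
  define S where "S = fourier_partial_sum N f"
  have "(\<lambda>n. fourier_energy n f) sums (\<Sum>n\<le>N. fourier_energy n f)"
    by (rule sums_finite) (use vanish in auto)
  then have "(\<Sum>n\<le>N. fourier_energy n f) = integral {0..2*pi} (\<lambda>t. (f t)^2) / pi"
    using parseval[OF f periodic] by (rule sums_unique2)
  then have "integral {0..2*pi} (\<lambda>t. (f t - S t)^2) = 0"
    unfolding S_def integral_sq_diff_fourier_partial_sum[OF f] by simp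
  then have on_period: "f t = S t" if "t \<in> {0..2*pi}" for t
    using that by (subst (asm) integral_eq_0_iff)
       (auto intro!: continuous_intros continuous_on_subset[OF f] simp: S_def fourier_partial_sum_def)
  have "f t = S t" for t
  proof -
    have "f (t + 2*pi) - S (t + 2*pi) = f t - S t" for t
      using periodic by (simp add: S_def fourier_partial_sum_def trig_poly_periodic)
    then obtain s where "s \<in> {0..2*pi}" "f t - S t = f s - S s"
      by (rule periodic_reduce[where f = "\<lambda>t. f t - S t"])
    then show ?thesis
      using on_period by simp
  qed
  then show "\<exists>a b. f = trig_poly N a b"
    unfolding S_def fourier_partial_sum_def by blast
qed

subsection \<open>Fourier coefficients of derivatives\<close>

lemma fourier_coeffs_deriv:
  fixes f f' :: "real \<Rightarrow> real"
  assumes deriv: "\<And>x. (f has_real_derivative f' x) (at x)"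
    and cont: "continuous_on UNIV f'" and periodic: "f (2*pi) = f 0"
  shows "fourier_cos n f' = real n * fourier_sin n f"
    and "fourier_sin n f' = - real n * fourier_cos n f"
proof -
  have "continuous_on UNIV f"
    by (rule continuous_at_imp_continuous_on) (use deriv DERIV_isCont in blast)
  note cont_intros = continuous_intros cont this
  have cos_period: "cos (real n * (2*pi)) = 1" and sin_period: "sin (real n * (2*pi)) = 0"
    using cos_2npi[of n] sin_2npi[of n] by (simp_all add: mult_ac)
  \<comment> \<open>integration by parts against \<open>cos (n t)\<close> and \<open>sin (n t)\<close>; the boundary terms cancel by periodicity\<close>
  have "((\<lambda>t. f' t * cos (real n * t) - real n * (f t * sin (real n * t))) has_integral
          f (2*pi) * cos (real n * (2*pi)) - f 0 * cos (real n * 0)) {0..2*pi}"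
    by (rule fundamental_theorem_of_calculus)
       (auto intro!: derivative_eq_intros deriv[THEN DERIV_chain2]
             simp: has_real_derivative_iff_has_vector_derivative[symmetric])
  then have "integral {0..2*pi} (\<lambda>t. f' t * cos (real n * t) - real n * (f t * sin (real n * t))) = 0"
    using periodic by (simp add: cos_period integral_unique)
  then have "integral {0..2*pi} (\<lambda>t. f' t * cos (real n * t))
               - real n * integral {0..2*pi} (\<lambda>t. f t * sin (real n * t)) = 0"
    by (subst (asm) integral_diff_continuous) (auto intro!: cont_intros)
  then show "fourier_cos n f' = real n * fourier_sin n f"
    unfolding fourier_cos_def fourier_sin_def by simp
  have "((\<lambda>t. f' t * sin (real n * t) + real n * (f t * cos (real n * t))) has_integral
          f (2*pi) * sin (real n * (2*pi)) - f 0 * sin (real n * 0)) {0..2*pi}"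
    by (rule fundamental_theorem_of_calculus)
       (auto intro!: derivative_eq_intros deriv[THEN DERIV_chain2]
             simp: has_real_derivative_iff_has_vector_derivative[symmetric])
  then have "integral {0..2*pi} (\<lambda>t. f' t * sin (real n * t) + real n * (f t * cos (real n * t))) = 0"
    by (simp add: sin_period integral_unique)
  then have "integral {0..2*pi} (\<lambda>t. f' t * sin (real n * t))
               + real n * integral {0..2*pi} (\<lambda>t. f t * cos (real n * t)) = 0"
    by (subst (asm) integral_add_continuous) (auto intro!: cont_intros)
  then show "fourier_sin n f' = - real n * fourier_cos n f"
    unfolding fourier_cos_def fourier_sin_def by (simp add: field_simps)
qed

lemma fourier_energy_deriv:
  assumes "fourier_cos n g = real n * fourier_sin n f" "fourier_sin n g = - real n * fourier_cos n f"
  shows "fourier_energy n g = (real n)^2 * fourier_energy n f"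
  using assms by (cases "n = 0") (simp_all add: fourier_energy_def power_mult_distrib algebra_simps)

lemma fourier_energy_scale:
  assumes "fourier_cos n g = c * fourier_cos n f" "fourier_sin n g = c * fourier_sin n f"
  shows "fourier_energy n g = c^2 * fourier_energy n f"
  using assms by (cases "n = 0") (simp_all add: fourier_energy_def power_mult_distrib algebra_simps)

lemma fourier_cos_add:
  "continuous_on UNIV f \<Longrightarrow> continuous_on UNIV g \<Longrightarrow>
     fourier_cos n (\<lambda>t. f t + g t) = fourier_cos n f + fourier_cos n g"
  unfolding fourier_cos_def distrib_right
  by (subst integral_add_continuous) (auto intro!: continuous_intros simp: add_divide_distrib)

lemma fourier_sin_add:
  "continuous_on UNIV f \<Longrightarrow> continuous_on UNIV g \<Longrightarrow>
     fourier_sin n (\<lambda>t. f t + g t) = fourier_sin n f + fourier_sin n g"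
  unfolding fourier_sin_def distrib_right
  by (subst integral_add_continuous) (auto intro!: continuous_intros simp: add_divide_distrib)

subsection \<open>The weight polynomial\<close>

lemma poly_P_poly: "poly (P_poly m) x = (\<Prod>j=2..m. x - (real j)^2)"
  by (simp add: P_poly_def poly_prod)

lemma degree_P_poly: "degree (P_poly m) = m - 1"
proof -
  have "degree (P_poly m) = (\<Sum>j=2..m. degree [: -((real j)^2), 1 :])"
    unfolding P_poly_def by (rule degree_prod_sum_eq) simp
  then show ?thesis
    by simp
qed

lemma P_poly_eq_S_poly: "P_poly m - [:poly (P_poly m) 1:] = [:-1, 1:] * S_poly m"
proof -
  have "[:-1, 1:] dvd P_poly m - [:poly (P_poly m) 1:]"
    using poly_eq_0_iff_dvd[of "P_poly m - [:poly (P_poly m) 1:]" 1] by simp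
  then show ?thesis
    unfolding S_poly_def by (rule dvd_mult_div_cancel[symmetric])
qed

lemma poly_S_poly: "(x - 1) * poly (S_poly m) x = poly (P_poly m) x - poly (P_poly m) 1"
  using arg_cong[where f = "\<lambda>p. poly p x", OF P_poly_eq_S_poly[of m]] by (simp add: algebra_simps)

lemma degree_S_poly: "degree (S_poly m) \<le> m - 2"
proof (cases "S_poly m = 0")
  case False
  have "1 + degree (S_poly m) = degree (P_poly m - [:poly (P_poly m) 1:])"
    unfolding P_poly_eq_S_poly using False by (subst degree_mult_eq) auto
  also have "\<dots> \<le> m - 1"
    by (rule degree_diff_le) (auto simp: degree_P_poly)
  finally show ?thesis
    by simp
qed simp

lemma sum_S_coeff: 
  assumes "m \<ge> 2"
  shows "(\<Sum>k=1..m-1. S_coeff m k * x^(k-1)) = poly (S_poly m) x"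
proof -
  have "(\<Sum>k=1..m-1. S_coeff m k * x^(k-1)) = (\<Sum>i=0..m-2. coeff (S_poly m) i * x^i)"
    using assms sum.shift_bounds_cl_Suc_ivl[of "\<lambda>k. S_coeff m k * x^(k-1)" 0 "m - 2"]
    by (simp add: S_coeff_def Suc_diff_Suc numeral_2_eq_2)
  also have "\<dots> = (\<Sum>i\<le>degree (S_poly m). coeff (S_poly m) i * x^i)"
    by (rule sum.mono_neutral_right) (use degree_S_poly[of m] in \<open>auto simp: coeff_eq_0\<close>)
  also have "\<dots> = poly (S_poly m) x"
    by (simp add: poly_altdef)
  finally show ?thesis .
qed

lemma poly_P_poly_1: "m \<ge> 1 \<Longrightarrow> poly (P_poly m) 1 = (-1)^(m-1) * fact (m-1) * fact (m+1) / 2"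
proof (induction m rule: nat_induct_at_least)
  case (Suc n)
  have "poly (P_poly (Suc n)) 1 = (1 - (real (Suc n))^2) * poly (P_poly n) 1"
    using Suc.hyps unfolding poly_P_poly by (subst prod.nat_ivl_Suc') auto
  also have "\<dots> = (-1)^(Suc n - 1) * fact (Suc n - 1) * fact (Suc n + 1) / 2"
  proof -
    obtain k where n: "n = Suc k"
      using Suc.hyps by (cases n) auto
    show ?thesis
      unfolding Suc.IH unfolding n by (simp add: fact_Suc algebra_simps power2_eq_square)
  qed
  finally show ?case .
qed (simp add: poly_P_poly)

lemma poly_P_poly_0: "m \<ge> 1 \<Longrightarrow> poly (P_poly m) 0 = (-1)^(m-1) * (fact m)^2"
proof (induction m rule: nat_induct_at_least)
  case (Suc n)
  have "poly (P_poly (Suc n)) 0 = - ((real (Suc n))^2) * poly (P_poly n) 0"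
    using Suc.hyps unfolding poly_P_poly by (subst prod.nat_ivl_Suc') auto
  also have "\<dots> = (-1)^(Suc n - 1) * (fact (Suc n))^2"
  proof -
    obtain k where n: "n = Suc k"
      using Suc.hyps by (cases n) auto
    show ?thesis
      unfolding Suc.IH unfolding n by (simp add: fact_Suc algebra_simps power2_eq_square)
  qed
  finally show ?case .
qed (simp add: poly_P_poly)

lemma poly_P_poly_eq_0: "2 \<le> n \<Longrightarrow> n \<le> m \<Longrightarrow> poly (P_poly m) ((real n)^2) = 0"
  unfolding poly_P_poly by (rule prod_zero) auto

lemma poly_P_poly_pos: "m < n \<Longrightarrow> poly (P_poly m) ((real n)^2) > 0"
  unfolding poly_P_poly by (rule prod_pos) (auto intro!: power_strict_mono)

text \<open>The factor with which the \<open>n\<close>-th Fourier mode of \<open>h\<close> enters the functional of the theorem.\<close>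

definition mode_weight :: "nat \<Rightarrow> nat \<Rightarrow> real" where
  "mode_weight m n =
     (-1)^m / 2 * fact (m - 1) * fact (m + 1) * (1 - (real n)^2)
     + (if n = 0 then (-1)^(m - 1) * (fact m)^2 else 0)
     + (\<Sum>k=1..m-1. S_coeff m k * (1 - (real n)^2)^2 * ((real n)^2)^(k - 1))"

lemma mode_weight_eq:
  assumes "m \<ge> 2"
  shows "mode_weight m n = (if n = 0 then 0 else ((real n)^2 - 1) * poly (P_poly m) ((real n)^2))"
proof -
  define x where "x = (real n)^2"
  have "(-1)^m / 2 * fact (m - 1) * fact (m + 1) = - poly (P_poly m) 1"
    using assms poly_P_poly_1[of m] by (simp add: power_eq_if)
  moreover have "(\<Sum>k=1..m-1. S_coeff m k * (1 - x)^2 * x^(k-1)) =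
      (1 - x) * (poly (P_poly m) 1 - poly (P_poly m) x)"
  proof -
    have "(\<Sum>k=1..m-1. S_coeff m k * (1 - x)^2 * x^(k-1)) = (1 - x)^2 * poly (S_poly m) x"
      unfolding sum_S_coeff[OF assms, symmetric] sum_distrib_left by (simp add: algebra_simps)
    also have "\<dots> = - (1 - x) * ((x - 1) * poly (S_poly m) x)"
      by (simp add: power2_eq_square algebra_simps)
    finally show ?thesis
      unfolding poly_S_poly by (simp add: algebra_simps)
  qed
  moreover have "poly (P_poly m) 0 = (-1)^(m - 1) * (fact m)^2"
    using assms by (simp add: poly_P_poly_0)
  ultimately have "mode_weight m n = (x - 1) * poly (P_poly m) x + (if n = 0 then poly (P_poly m) 0 else 0)"
    unfolding mode_weight_def x_def[symmetric] by (simp add: algebra_simps)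
  then show ?thesis
    by (simp add: x_def)
qed

lemma mode_weight_nonneg:
  assumes "m \<ge> 2"
  shows "0 \<le> mode_weight m n"
proof -
  consider "n = 0" | "n = 1" | "2 \<le> n" "n \<le> m" | "m < n"
    by linarith
  then show ?thesis
  proof cases
    case 4
    then have "1 < real n"
      using assms by simp
    then show ?thesis
      using poly_P_poly_pos[OF 4] by (simp add: mode_weight_eq[OF assms] less_imp_le)
  qed (simp_all add: mode_weight_eq[OF assms] poly_P_poly_eq_0)
qed

lemma mode_weight_eq_0_iff:
  assumes "m \<ge> 2"
  shows "mode_weight m n = 0 \<longleftrightarrow> n \<le> m"
proof -
  consider "n = 0" | "n = 1" | "2 \<le> n" "n \<le> m" | "m < n"
    by linarith
  then show ?thesis
  proof cases
    case 4
    then have "1 < real n"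
      using assms by simp
    then have "1 < (real n)^2"
      by (simp add: one_less_power)
    then show ?thesis
      using poly_P_poly_pos[OF 4] 4 by (simp add: mode_weight_eq[OF assms])
  qed (use assms in \<open>simp_all add: mode_weight_eq[OF assms] poly_P_poly_eq_0\<close>)
qed

context
  fixes m :: nat and h :: "real \<Rightarrow> real"
  assumes m: "m \<ge> 2"
    and periodic: "\<And>t. h (t + 2 * pi) = h t"
    and smooth: "C_class m h"
begin

lemma has_real_derivative_iterated_deriv:
  "j < m \<Longrightarrow> ((deriv ^^ j) h has_real_derivative (deriv ^^ Suc j) h x) (at x)"
  using smooth unfolding C_class_def by (simp add: DERIV_deriv_iff_real_differentiable)

lemma continuous_on_iterated_deriv: "j \<le> m \<Longrightarrow> continuous_on UNIV ((deriv ^^ j) h)"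
proof (cases "j = m")
  case False
  assume "j \<le> m"
  with False have "j < m"
    by simp
  show ?thesis
    by (intro continuous_at_imp_continuous_on ballI
          DERIV_isCont[OF has_real_derivative_iterated_deriv[OF \<open>j < m\<close>]])
qed (use smooth in \<open>simp add: C_class_def\<close>)

lemma periodic_iterated_deriv: "j \<le> m \<Longrightarrow> (deriv ^^ j) h (t + 2*pi) = (deriv ^^ j) h t"
proof (induction j arbitrary: t)
  case 0
  then show ?case
    using periodic by simp
next
  case (Suc j)
  then have "j < m"
    by simp
  have "((\<lambda>x. (deriv ^^ j) h (x + 2*pi)) has_real_derivative (deriv ^^ Suc j) h (t + 2*pi)) (at t)"
    using has_real_derivative_iterated_deriv[OF \<open>j < m\<close>, of "t + 2*pi"] by (simp only: DERIV_shift)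
  moreover have "(\<lambda>x. (deriv ^^ j) h (x + 2*pi)) = (deriv ^^ j) h"
    using Suc.IH \<open>j < m\<close> by auto
  ultimately show ?case
    using has_real_derivative_iterated_deriv[OF \<open>j < m\<close>, of t] DERIV_unique by metis
qed

lemma fourier_coeffs_iterated_deriv:
  assumes "j < m"
  shows "fourier_cos n ((deriv ^^ Suc j) h) = real n * fourier_sin n ((deriv ^^ j) h)"
    and "fourier_sin n ((deriv ^^ Suc j) h) = - real n * fourier_cos n ((deriv ^^ j) h)"
proof -
  have "(deriv ^^ j) h (2*pi) = (deriv ^^ j) h 0"
    using periodic_iterated_deriv[of j 0] assms by simp
  moreover have "continuous_on UNIV ((deriv ^^ Suc j) h)"
    using assms by (intro continuous_on_iterated_deriv) simp
  ultimately show "fourier_cos n ((deriv ^^ Suc j) h) = real n * fourier_sin n ((deriv ^^ j) h)"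
    and "fourier_sin n ((deriv ^^ Suc j) h) = - real n * fourier_cos n ((deriv ^^ j) h)"
    using fourier_coeffs_deriv[OF has_real_derivative_iterated_deriv[OF assms]] by blast+
qed

lemma fourier_energy_iterated_deriv:
  "j \<le> m \<Longrightarrow> fourier_energy n ((deriv ^^ j) h) = ((real n)^2)^j * fourier_energy n h"
proof (induction j)
  case (Suc j)
  then show ?case
    using fourier_energy_deriv[OF fourier_coeffs_iterated_deriv] by simp
qed simp

lemma fourier_energy_iterated_deriv_sum:
  assumes "j + 2 \<le> m"
  shows "fourier_energy n (\<lambda>t. (deriv ^^ (j + 2)) h t + (deriv ^^ j) h t) =
           (1 - (real n)^2)^2 * ((real n)^2)^j * fourier_energy n h"
proof -
  have "fourier_cos n ((deriv ^^ (j + 2)) h) = - ((real n)^2) * fourier_cos n ((deriv ^^ j) h)"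
       "fourier_sin n ((deriv ^^ (j + 2)) h) = - ((real n)^2) * fourier_sin n ((deriv ^^ j) h)"
    using fourier_coeffs_iterated_deriv[of "Suc j"] fourier_coeffs_iterated_deriv[of j] assms
    by (simp_all add: power2_eq_square)
  moreover have "continuous_on UNIV ((deriv ^^ (j + 2)) h)"
    by (rule continuous_on_iterated_deriv) (use assms in simp)
  moreover have "continuous_on UNIV ((deriv ^^ j) h)"
    by (rule continuous_on_iterated_deriv) (use assms in simp)
  ultimately have "fourier_energy n (\<lambda>t. (deriv ^^ (j + 2)) h t + (deriv ^^ j) h t)
      = (1 - (real n)^2)^2 * fourier_energy n ((deriv ^^ j) h)"
    by (intro fourier_energy_scale) (simp_all add: fourier_cos_add fourier_sin_add algebra_simps)
  then show ?thesis
    using assms by (simp add: fourier_energy_iterated_deriv)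
qed

lemma parseval_iterated_deriv:
  "j \<le> m \<Longrightarrow> (\<lambda>n. ((real n)^2)^j * fourier_energy n h)
               sums (integral {0..2*pi} (\<lambda>t. ((deriv ^^ j) h t)^2) / pi)"
  using parseval[OF continuous_on_iterated_deriv periodic_iterated_deriv]
  by (simp add: fourier_energy_iterated_deriv)

lemma parseval_iterated_deriv_sum:
  assumes "j + 2 \<le> m"
  shows "(\<lambda>n. (1 - (real n)^2)^2 * ((real n)^2)^j * fourier_energy n h) sums
           (integral {0..2*pi} (\<lambda>t. ((deriv ^^ (j + 2)) h t + (deriv ^^ j) h t)^2) / pi)"
proof -
  have "continuous_on UNIV (\<lambda>t. (deriv ^^ (j + 2)) h t + (deriv ^^ j) h t)"
    using assms by (intro continuous_intros continuous_on_iterated_deriv) simp_all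
  moreover have "(deriv ^^ (j + 2)) h (t + 2*pi) + (deriv ^^ j) h (t + 2*pi) =
                 (deriv ^^ (j + 2)) h t + (deriv ^^ j) h t" for t
    using assms periodic_iterated_deriv[of "j + 2" t] periodic_iterated_deriv[of j t] by simp
  ultimately have "(\<lambda>n. fourier_energy n (\<lambda>t. (deriv ^^ (j + 2)) h t + (deriv ^^ j) h t)) sums
      (integral {0..2*pi} (\<lambda>t. ((deriv ^^ (j + 2)) h t + (deriv ^^ j) h t)^2) / pi)"
    by (rule parseval)
  then show ?thesis
    unfolding fourier_energy_iterated_deriv_sum[OF assms] .
qed

lemma functional_sums_mode_weights:
  "(\<lambda>n. pi * (mode_weight m n * fourier_energy n h)) sums
     ((-1) ^ m / 2 * fact (m - 1) * fact (m + 1) * integral {0..2*pi} (\<lambda>t. (h t)^2 - (deriv h t)^2)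
      + (-1) ^ (m - 1) * (fact m)^2 / (2 * pi) * (integral {0..2*pi} h)^2
      + (\<Sum>k=1..m-1. S_coeff m k *
          integral {0..2*pi} (\<lambda>t. ((deriv ^^ (k + 1)) h t + (deriv ^^ (k - 1)) h t)^2)))"
proof -
  define A :: real where "A = (-1) ^ m / 2 * fact (m - 1) * fact (m + 1)"
  define B :: real where "B = (-1) ^ (m - 1) * (fact m)^2"
  define I where "I j = integral {0..2*pi} (\<lambda>t. ((deriv ^^ j) h t)^2)" for j
  define G where "G k = integral {0..2*pi} (\<lambda>t. ((deriv ^^ (k + 1)) h t + (deriv ^^ (k - 1)) h t)^2)" for k
  have I0: "(\<lambda>n. fourier_energy n h) sums (I 0 / pi)"
    using parseval_iterated_deriv[of 0] by (simp add: I_def)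
  have I1: "(\<lambda>n. (real n)^2 * fourier_energy n h) sums (I 1 / pi)"
    using parseval_iterated_deriv[of 1] m by (simp add: I_def)
  have G: "(\<lambda>n. (1 - (real n)^2)^2 * ((real n)^2)^(k - 1) * fourier_energy n h) sums (G k / pi)"
    if "k \<in> {1..m-1}" for k
  proof -
    have k: "k - 1 + 2 = k + 1" "k - 1 + 2 \<le> m"
      using that by auto
    show ?thesis
      using parseval_iterated_deriv_sum[OF k(2)] unfolding k(1) G_def .
  qed
  have weight: "mode_weight m n * fourier_energy n h =
      A * (fourier_energy n h - (real n)^2 * fourier_energy n h)
      + (if n = 0 then B * fourier_energy n h else 0)
      + (\<Sum>k=1..m-1. S_coeff m k * ((1 - (real n)^2)^2 * ((real n)^2)^(k - 1) * fourier_energy n h))"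
    for n unfolding mode_weight_def A_def B_def
    by (simp add: algebra_simps sum_distrib_left sum_distrib_right)
  have "(\<lambda>n. mode_weight m n * fourier_energy n h) sums
      (A * (I 0 / pi - I 1 / pi) + B * fourier_energy 0 h + (\<Sum>k=1..m-1. S_coeff m k * (G k / pi)))"
    unfolding weight
    by (intro sums_add sums_mult sums_diff sums_sum I0 I1 G)
       (use sums_single[of 0 "\<lambda>n. B * fourier_energy n h"] in simp)
  then have "(\<lambda>n. pi * (mode_weight m n * fourier_energy n h)) sums
      (pi * (A * (I 0 / pi - I 1 / pi) + B * fourier_energy 0 h + (\<Sum>k=1..m-1. S_coeff m k * (G k / pi))))"
    by (rule sums_mult)
  moreover have "pi * (A * (I 0 / pi - I 1 / pi) + B * fourier_energy 0 h
                        + (\<Sum>k=1..m-1. S_coeff m k * (G k / pi)))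
      = A * (I 0 - I 1) + B / (2 * pi) * (2 * pi^2 * fourier_energy 0 h) + (\<Sum>k=1..m-1. S_coeff m k * G k)"
    by (simp add: field_simps sum_distrib_left sum_divide_distrib power2_eq_square)
  moreover have "integral {0..2*pi} (\<lambda>t. (h t)^2 - (deriv h t)^2) = I 0 - I 1"
    unfolding I_def using continuous_on_iterated_deriv[of 0] continuous_on_iterated_deriv[of 1] m
    by (subst integral_diff_continuous) (auto intro!: continuous_intros)
  moreover have "(integral {0..2*pi} h)^2 = 2 * pi^2 * fourier_energy 0 h"
    by (simp add: fourier_energy_def fourier_cos_def power_divide)
  ultimately show ?thesis
    unfolding A_def[symmetric] B_def[symmetric] G_def[symmetric] by simp
qed

end

theorem proposition2p3:
  fixes m :: nat and h :: "real \<Rightarrow> real"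
  assumes m: "m \<ge> 2"
    and periodic: "\<And>t. h (t + 2 * pi) = h t"
    and smooth: "C_class m h"
  defines "Q \<equiv> (-1) ^ m / 2 * fact (m - 1) * fact (m + 1)
                 * integral {0..2*pi} (\<lambda>t. (h t)^2 - (deriv h t)^2)
               + (-1) ^ (m - 1) * (fact m)^2 / (2 * pi) * (integral {0..2*pi} h)^2
               + (\<Sum>k=1..m-1. S_coeff m k *
                   integral {0..2*pi} (\<lambda>t. ((deriv ^^ (k + 1)) h t + (deriv ^^ (k - 1)) h t)^2))"
  shows "0 \<le> Q \<and>
         (Q = 0 \<longleftrightarrow> (\<exists>\<alpha> \<beta> :: nat \<Rightarrow> real. \<forall>t.
              h t = (\<Sum>n=0..m. \<alpha> n * cos (real n * t) + \<beta> n * sin (real n * t))))"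
proof -
  have sums: "(\<lambda>n. pi * (mode_weight m n * fourier_energy n h)) sums Q"
    unfolding Q_def by (rule functional_sums_mode_weights[OF m periodic smooth])
  have nonneg: "0 \<le> pi * (mode_weight m n * fourier_energy n h)" for n
    using mode_weight_nonneg[OF m] fourier_energy_nonneg by simp
  have Q_suminf: "Q = (\<Sum>n. pi * (mode_weight m n * fourier_energy n h))"
    using sums by (rule sums_unique)
  have "0 \<le> Q"
    unfolding Q_suminf by (intro suminf_nonneg sums_summable[OF sums] nonneg)
  have "Q = 0 \<longleftrightarrow> (\<forall>n. pi * (mode_weight m n * fourier_energy n h) = 0)"
    unfolding Q_suminf by (rule suminf_eq_zero_iff[OF sums_summable[OF sums] nonneg])
  also have "\<dots> \<longleftrightarrow> (\<forall>n>m. fourier_energy n h = 0)"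
  proof -
    have "pi * (mode_weight m n * fourier_energy n h) = 0 \<longleftrightarrow> n \<le> m \<or> fourier_energy n h = 0" for n
      by (simp add: mode_weight_eq_0_iff[OF m])
    then show ?thesis
      by (meson not_le)
  qed
  also have "\<dots> \<longleftrightarrow> (\<exists>\<alpha> \<beta>. h = trig_poly m \<alpha> \<beta>)"
    using continuous_on_iterated_deriv[OF m periodic smooth, of 0]
    by (intro trig_poly_iff_fourier_energy_vanishes[symmetric] periodic) simp
  finally show ?thesis
    using \<open>0 \<le> Q\<close> by (simp add: trig_poly_def fun_eq_iff atLeast0AtMost)
qed

end
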